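(* In the periodic lock scheduling problem, there exists an optimal schedule $\sigma$ such that no two consecutive periods $t$ and $t+1$ both have $\sigma(t)=\sigma(t+1)=W$.
   Context: Periodic lock scheduling problem. Time is discrete, periods $t=1,2,\dots$. There are $k$ vessel streams; stream $i$ has a direction $\delta_i\in\{D,U\}$, an integer periodicity $\lambda_i\ge1$ and an integer offset $1\le\mu_i\le\lambda_i$; $a_i(t)=1$ if $t\equiv\mu_i\pmod{\lambda_i}$ and $0$ otherwise, $a_\delta(t)=\sum_{i:\delta_i=\delta}a_i(t)$. A schedule is a sequence $\sigma=(\sigma(t))_{t\ge1}$ with $\sigma(t)\in\{D,U,W\}$ ($D$: process downstream waiting vessels and switch alignment from downstream to upstream; $U$ symmetrically; $W$: wait at current alignment); the initial orientation is arbitrary; it is feasible if the non-$W$ actions alternate between $D$ and $U$. Queue lengths: $n_D(0)=n_U(0)=0$ and for $t\ge1$, $n_\delta(t)=0$ if $\sigma(t)=\delta$ and $n_\delta(t)=n_\delta(t-1)+a_\delta(t)$ otherwise. $C_\sigma(t)=n_D(t)+n_U(t)$ and $C_{\mathrm{avg},\sigma}=\lim_{T\to\infty}\frac1T\sum_{t=1}^TC_\sigma(t)$. A schedule is optimal if it is feasible and minimizes $C_{\mathrm{avg},\sigma}$ over all feasible schedules. *)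

theory Defs
  imports Complex_Main
begin

datatype dir = Down | Up

text \<open>Actions of a schedule: process direction d (and switch), or wait.\<close>
datatype action = Proc dir | Wait

text \<open>A stream is (direction, periodicity lambda, offset mu).\<close>
type_synonym stream = "dir \<times> nat \<times> nat"

definition valid_streams :: "stream list \<Rightarrow> bool" where
  "valid_streams S \<longleftrightarrow> (\<forall>(d, l, m) \<in> set S. 1 \<le> l \<and> 1 \<le> m \<and> m \<le> l)"

definition arr :: "stream \<Rightarrow> nat \<Rightarrow> nat" where
  "arr s t = (case s of (d, l, m) \<Rightarrow> if t mod l = m mod l then 1 else 0)"

definition arr_dir :: "stream list \<Rightarrow> dir \<Rightarrow> nat \<Rightarrow> nat" where
  "arr_dir S d t = (\<Sum>i<length S. if fst (S ! i) = d then arr (S ! i) t else 0)"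

text \<open>Schedules: sigma :: nat => action, only values at t >= 1 matter.
  Feasible: the non-wait actions alternate (initial orientation arbitrary).\<close>
definition feasible :: "(nat \<Rightarrow> action) \<Rightarrow> bool" where
  "feasible \<sigma> \<longleftrightarrow> (\<forall>s t d. 1 \<le> s \<and> s < t \<and> \<sigma> s = Proc d \<and> \<sigma> t \<noteq> Wait
      \<and> (\<forall>r. s < r \<and> r < t \<longrightarrow> \<sigma> r = Wait) \<longrightarrow> \<sigma> t \<noteq> Proc d)"

fun queue :: "stream list \<Rightarrow> (nat \<Rightarrow> action) \<Rightarrow> dir \<Rightarrow> nat \<Rightarrow> nat" where
  "queue S \<sigma> d 0 = 0"
| "queue S \<sigma> d (Suc t) =
     (if \<sigma> (Suc t) = Proc d then 0 else queue S \<sigma> d t + arr_dir S d (Suc t))"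

definition cost :: "stream list \<Rightarrow> (nat \<Rightarrow> action) \<Rightarrow> nat \<Rightarrow> nat" where
  "cost S \<sigma> t = queue S \<sigma> Down t + queue S \<sigma> Up t"

definition avg_cost_partial :: "stream list \<Rightarrow> (nat \<Rightarrow> action) \<Rightarrow> nat \<Rightarrow> real" where
  "avg_cost_partial S \<sigma> T = (\<Sum>t=1..T. real (cost S \<sigma> t)) / real T"

definition has_avg_cost :: "stream list \<Rightarrow> (nat \<Rightarrow> action) \<Rightarrow> real \<Rightarrow> bool" where
  "has_avg_cost S \<sigma> c \<longleftrightarrow> (avg_cost_partial S \<sigma> \<longlonglongrightarrow> c)"

definition optimal :: "stream list \<Rightarrow> (nat \<Rightarrow> action) \<Rightarrow> bool" where
  "optimal S \<sigma> \<longleftrightarrow> feasible \<sigma> \<and> (\<exists>c. has_avg_cost S \<sigma> c \<and>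
     (\<forall>\<sigma>' c'. feasible \<sigma>' \<and> has_avg_cost S \<sigma>' c' \<longrightarrow> c \<le> c'))"

end

theory Submission
  imports Defs
begin

text \<open>
  A schedule is abstracted to a walk in a finite graph. A state records the arrival phase
  t mod (product of the periodicities), the direction processed last, both queue lengths and
  whether the last action was a wait; the edges forbid processing the same direction twice in a
  row and waiting twice in a row. In a finite graph, repeating a cycle of minimum mean cost forever
  attains that mean, while cutting short cycles out of an arbitrary walk shows that its partial
  cost sums are at least T times the minimum mean, up to a constant.
  Every feasible schedule can be turned into one that never waits twice in a row and whose queues
  are never longer: process during every idle period except, when necessary, the one just before a
  processing. So every feasible schedule has average cost at least the minimum cycle mean, which
  is attained by a schedule without consecutive waits.
\<close>

section \<open>Averages of real sequences\<close>

lemma average_tendsto_if_deviation_bounded: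
  fixes f :: "nat \<Rightarrow> real"
  assumes "\<And>T. \<bar>(\<Sum>t=1..T. f t) - real T * \<mu>\<bar> \<le> K"
  shows "(\<lambda>T. (\<Sum>t=1..T. f t) / real T) \<longlonglongrightarrow> \<mu>"
proof (rule tendsto_sandwich)
  have "\<mu> - K / real T \<le> (\<Sum>t=1..T. f t) / real T \<and> (\<Sum>t=1..T. f t) / real T \<le> \<mu> + K / real T"
    if "1 \<le> T" for T
  proof -
    have "real T * \<mu> - K \<le> (\<Sum>t=1..T. f t)" "(\<Sum>t=1..T. f t) \<le> real T * \<mu> + K"
      using assms[of T] by linarith+
    then have "(real T * \<mu> - K) / real T \<le> (\<Sum>t=1..T. f t) / real T"
      "(\<Sum>t=1..T. f t) / real T \<le> (real T * \<mu> + K) / real T"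
      by (simp_all add: divide_right_mono)
    then show ?thesis using that by (simp add: diff_divide_distrib add_divide_distrib)
  qed
  then show "\<forall>\<^sub>F T in sequentially. \<mu> - K / real T \<le> (\<Sum>t=1..T. f t) / real T"
    and "\<forall>\<^sub>F T in sequentially. (\<Sum>t=1..T. f t) / real T \<le> \<mu> + K / real T"
    by (auto intro: eventually_sequentiallyI)
  show "(\<lambda>T. \<mu> - K / real T) \<longlonglongrightarrow> \<mu>"
    using tendsto_diff[OF tendsto_const lim_const_over_n] by simp
  show "(\<lambda>T. \<mu> + K / real T) \<longlonglongrightarrow> \<mu>"
    using tendsto_add[OF tendsto_const lim_const_over_n] by simp
qed

lemma average_limit_ge:
  fixes f :: "nat \<Rightarrow> real"
  assumes "\<And>T. real T * \<mu> - K \<le> (\<Sum>t=1..T. f t)"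
    and "(\<lambda>T. (\<Sum>t=1..T. f t) / real T) \<longlonglongrightarrow> c"
  shows "\<mu> \<le> c"
proof (rule LIMSEQ_le)
  show "(\<lambda>T. \<mu> - K / real T) \<longlonglongrightarrow> \<mu>"
    using tendsto_diff[OF tendsto_const lim_const_over_n] by simp
  have "\<mu> - K / real T \<le> (\<Sum>t=1..T. f t) / real T" if "1 \<le> T" for T
  proof -
    have "(real T * \<mu> - K) / real T \<le> (\<Sum>t=1..T. f t) / real T"
      using assms(1)[of T] by (simp add: divide_right_mono)
    then show ?thesis using that by (simp add: diff_divide_distrib)
  qed
  then show "\<exists>N. \<forall>T\<ge>N. \<mu> - K / real T \<le> (\<Sum>t=1..T. f t) / real T" by blast
qed (rule assms(2))

lemma eventually_periodic_average:
  fixes f :: "nat \<Rightarrow> real"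
  assumes "0 < n" and periodic: "\<And>t. i \<le> t \<Longrightarrow> f (t + n) = f t"
  shows "(\<lambda>T. (\<Sum>t=1..T. f t) / real T) \<longlonglongrightarrow> (\<Sum>t=Suc i..i + n. f t) / real n"
proof (rule average_tendsto_if_deviation_bounded)
  define \<mu> where "\<mu> = (\<Sum>t=Suc i..i + n. f t) / real n"
  have window: "(\<Sum>t=Suc T..T + n. f t) = real n * \<mu>" if "i \<le> T" for T
    using that
  proof (induction T rule: dec_induct)
    case base then show ?case using \<open>0 < n\<close> by (simp add: \<mu>_def)
  next
    case (step T)
    have "(\<Sum>t=Suc T..T + n. f t) = f (Suc T) + (\<Sum>t=Suc (Suc T)..T + n. f t)"
      using \<open>0 < n\<close> by (intro sum.atLeast_Suc_atMost) simp
    moreover have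
      "(\<Sum>t=Suc (Suc T)..Suc T + n. f t) = (\<Sum>t=Suc (Suc T)..T + n. f t) + f (Suc T + n)"
      using \<open>0 < n\<close> by simp
    ultimately show ?case using step periodic[of "Suc T"] by simp
  qed
  define D where "D T = (\<Sum>t=1..T. f t) - real T * \<mu>" for T
  have D_periodic: "D (T + n) = D T" if "i \<le> T" for T
  proof -
    have "(\<Sum>t=1..T + n. f t) = (\<Sum>t=1..T. f t) + (\<Sum>t=Suc T..T + n. f t)"
      using sum.ub_add_nat[of 1 T f n] by simp
    then show ?thesis using window[OF that] by (simp add: D_def algebra_simps)
  qed
  have "\<bar>D T\<bar> \<le> Max ((\<lambda>T. \<bar>D T\<bar>) ` {..i + n})" for T
  proof (induction T rule: less_induct)
    case (less T)
    show ?case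
    proof (cases "T \<le> i + n")
      case False
      then have "D T = D (T - n)" using D_periodic[of "T - n"] by simp
      then show ?thesis using less.IH[of "T - n"] False \<open>0 < n\<close> by simp
    qed simp
  qed
  then show "\<bar>(\<Sum>t=1..T. f t) - real T * \<mu>\<bar> \<le> Max ((\<lambda>T. \<bar>D T\<bar>) ` {..i + n})" for T
    by (simp add: D_def)
qed

section \<open>Minimum mean walks in a finite graph\<close>

definition skip_index :: "nat \<Rightarrow> nat \<Rightarrow> nat \<Rightarrow> nat" where
  "skip_index i d t = (if t \<le> i then t else t + d)"

lemma sum_skip_block:
  fixes f :: "nat \<Rightarrow> 'a::comm_monoid_add"
  assumes "i < j" "j \<le> T"
  shows "(\<Sum>t=1..T. f t)
    = (\<Sum>t=1..T - (j - i). f (skip_index i (j - i) t)) + (\<Sum>t=Suc i..j. f t)"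
proof -
  have "inj_on (skip_index i (j - i)) {1..T - (j - i)}"
    by (auto simp: skip_index_def inj_on_def split: if_splits)
  moreover have "skip_index i (j - i) ` {1..T - (j - i)} = {1..T} - {Suc i..j}"
  proof
    show "{1..T} - {Suc i..j} \<subseteq> skip_index i (j - i) ` {1..T - (j - i)}"
    proof
      fix t assume t: "t \<in> {1..T} - {Suc i..j}"
      show "t \<in> skip_index i (j - i) ` {1..T - (j - i)}"
      proof (cases "t \<le> i")
        case True
        then show ?thesis using t assms by (intro image_eqI[of _ _ t]) (auto simp: skip_index_def)
      next
        case False
        then show ?thesis
          using t assms by (intro image_eqI[of _ _ "t - (j - i)"]) (auto simp: skip_index_def)
      qed
    qed
  qed (use assms in \<open>auto simp: skip_index_def\<close>)
  ultimately have
    "(\<Sum>t=1..T - (j - i). f (skip_index i (j - i) t)) = (\<Sum>t\<in>{1..T} - {Suc i..j}. f t)"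
    using sum.reindex[of "skip_index i (j - i)" "{1..T - (j - i)}" f] by simp
  moreover have "(\<Sum>t=1..T. f t) = (\<Sum>t\<in>{1..T} - {Suc i..j}. f t) + (\<Sum>t=Suc i..j. f t)"
    using assms by (intro sum.subset_diff) auto
  ultimately show ?thesis by simp
qed

definition walk :: "('s \<Rightarrow> 's \<Rightarrow> bool) \<Rightarrow> 's \<Rightarrow> (nat \<Rightarrow> 's) \<Rightarrow> bool" where
  "walk E x0 w \<longleftrightarrow> w 0 = x0 \<and> (\<forall>t. E (w t) (w (Suc t)))"

lemma walk_skip_cycle:
  assumes "walk E x0 w" "i < j" "w i = w j"
  shows "walk E x0 (w \<circ> skip_index i (j - i))"
  unfolding walk_def
proof (intro conjI allI)
  show "(w \<circ> skip_index i (j - i)) 0 = x0" using assms(1) by (simp add: walk_def skip_index_def)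
  fix t
  consider "t < i" | "t = i" | "i < t" by linarith
  then show "E ((w \<circ> skip_index i (j - i)) t) ((w \<circ> skip_index i (j - i)) (Suc t))"
  proof cases
    case 2
    have "E (w j) (w (Suc j))" using assms(1) by (simp add: walk_def)
    then show ?thesis using 2 assms(2,3) by (simp add: skip_index_def)
  qed (use assms(1) in \<open>auto simp: skip_index_def walk_def\<close>)
qed

lemma walk_repeat_cycle:
  assumes "walk E x0 w" "i < j" "w i = w j"
  defines "W \<equiv> \<lambda>t. if t < i then w t else w (i + (t - i) mod (j - i))"
  shows "walk E x0 W" and "\<And>t. i \<le> t \<Longrightarrow> W (t + (j - i)) = W t"
    and "\<And>t. t \<le> j \<Longrightarrow> W t = w t"
proof -
  show W_eq: "W t = w t" if "t \<le> j" for t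
    using that assms(2,3) by (cases "t = j") (auto simp: W_def)
  show "W (t + (j - i)) = W t" if "i \<le> t" for t
  proof -
    have "t + (j - i) - i = (t - i) + (j - i)" using that by simp
    then have "(t + (j - i) - i) mod (j - i) = (t - i) mod (j - i)"
      by (simp only: mod_add_self2)
    then show ?thesis using that by (simp add: W_def)
  qed
  show "walk E x0 W"
    unfolding walk_def
  proof (intro conjI allI)
    show "W 0 = x0" using W_eq[of 0] assms(1) by (simp add: walk_def)
    fix t
    show "E (W t) (W (Suc t))"
    proof (cases "t < i")
      case True
      then show ?thesis using W_eq[of t] W_eq[of "Suc t"] assms(1,2) by (simp add: walk_def)
    next
      case False
      define r where "r = (t - i) mod (j - i)"
      have "r < j - i" using assms(2) by (simp add: r_def)
      then have "Suc (i + r) \<le> j" by simp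
      moreover have "W (Suc t) = W (Suc (i + r))"
      proof -
        have "(Suc t - i) mod (j - i) = Suc r mod (j - i)"
          using False by (simp add: r_def mod_Suc_eq Suc_diff_le)
        then show ?thesis using False \<open>r < j - i\<close> by (simp add: W_def)
      qed
      moreover have "W t = w (i + r)" using False by (simp add: W_def r_def)
      ultimately show ?thesis using W_eq[of "Suc (i + r)"] assms(1) by (simp add: walk_def)
    qed
  qed
qed

locale finite_walks =
  fixes E :: "'s \<Rightarrow> 's \<Rightarrow> bool" and Q :: "'s set" and x0 :: 's
  assumes finite_Q: "finite Q" and x0_in_Q: "x0 \<in> Q"
    and edge_closed: "\<And>x y. x \<in> Q \<Longrightarrow> E x y \<Longrightarrow> y \<in> Q"
begin

lemma walk_in_Q: "walk E x0 w \<Longrightarrow> w t \<in> Q"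
  by (induction t) (auto simp: walk_def x0_in_Q intro: edge_closed)

lemma walk_repeats_early:
  assumes "walk E x0 w"
  obtains i j where "i < j" "j \<le> card Q" "w i = w j"
proof -
  have "card (w ` {0..card Q}) \<le> card Q"
    using walk_in_Q[OF assms] by (intro card_mono finite_Q) auto
  then have "\<not> inj_on w {0..card Q}"
    by (intro pigeonhole) simp
  then obtain i j where "i \<le> card Q" "j \<le> card Q" "i \<noteq> j" "w i = w j"
    by (auto simp: inj_on_def)
  then show thesis
    by (metis linorder_neqE_nat that)
qed

text \<open>Bounding the cycle length by \<open>card Q\<close> keeps this set finite.\<close>

definition cycle_means :: "('s \<Rightarrow> real) \<Rightarrow> real set" where
  "cycle_means g = {(\<Sum>t=Suc i..j. g (w t)) / real (j - i) | w i j.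
     walk E x0 w \<and> i < j \<and> j \<le> i + card Q \<and> w i = w j}"

lemma finite_cycle_means: "finite (cycle_means g)"
proof -
  let ?mean = "\<lambda>xs. sum_list (map g xs) / real (length xs)"
  have "cycle_means g \<subseteq> ?mean ` {xs. set xs \<subseteq> Q \<and> length xs \<le> card Q}"
  proof
    fix m assume "m \<in> cycle_means g"
    then obtain w i j where m: "m = (\<Sum>t=Suc i..j. g (w t)) / real (j - i)"
      and w: "walk E x0 w" "i < j" "j \<le> i + card Q"
      unfolding cycle_means_def by blast
    let ?xs = "map w [Suc i..<Suc j]"
    have "sum_list (map g ?xs) = (\<Sum>t=Suc i..j. g (w t))"
      by (simp only: map_map comp_def sum_set_upt_conv_sum_list_nat [symmetric] set_upt
          atLeastLessThanSuc_atLeastAtMost)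
    then have "m = ?mean ?xs" using m w(2) by simp
    moreover have "set ?xs \<subseteq> Q" "length ?xs \<le> card Q"
      using w walk_in_Q by auto
    ultimately show "m \<in> ?mean ` {xs. set xs \<subseteq> Q \<and> length xs \<le> card Q}" by blast
  qed
  then show ?thesis
    by (rule finite_subset) (intro finite_imageI finite_lists_length_le finite_Q)
qed

lemma cycle_means_nonempty:
  assumes "walk E x0 w"
  shows "cycle_means g \<noteq> {}"
proof -
  obtain i j where "i < j" "j \<le> card Q" "w i = w j"
    using walk_repeats_early[OF assms] .
  then show ?thesis using assms unfolding cycle_means_def by fastforce
qed

lemma walk_sum_deviation_ge:
  assumes "walk E x0 w"
    and B: "\<And>x. x \<in> Q \<Longrightarrow> \<bar>g x - \<mu>\<bar> \<le> B"
    and cycle_ge: "\<And>v i j. walk E x0 v \<Longrightarrow> i < j \<Longrightarrow> j \<le> i + card Q \<Longrightarrow> v i = v j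
      \<Longrightarrow> real (j - i) * \<mu> \<le> (\<Sum>t=Suc i..j. g (v t))"
  shows "- (real (card Q) * B) \<le> (\<Sum>t=1..T. g (w t) - \<mu>)"
  using assms(1)
proof (induction T arbitrary: w rule: less_induct)
  case (less T)
  obtain i j where ij: "i < j" "j \<le> card Q" "w i = w j"
    using walk_repeats_early[OF less.prems] .
  show ?case
  proof (cases "j \<le> T")
    case True
    have "- (real (card Q) * B) \<le> (\<Sum>t=1..T - (j - i). g ((w \<circ> skip_index i (j - i)) t) - \<mu>)"
      using ij True by (intro less.IH walk_skip_cycle less.prems) auto
    moreover have "0 \<le> (\<Sum>t=Suc i..j. g (w t) - \<mu>)"
      using cycle_ge[OF less.prems ij(1) _ ij(3)] ij(2) by (simp add: sum_subtractf)
    ultimately show ?thesis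
      using sum_skip_block[OF ij(1) True, of "\<lambda>t. g (w t) - \<mu>"] by simp
  next
    case False
    have "(\<Sum>t=1..T. - B) \<le> (\<Sum>t=1..T. g (w t) - \<mu>)"
      using B[OF walk_in_Q[OF less.prems]] by (intro sum_mono) (smt (verit))
    then have "- (real T * B) \<le> (\<Sum>t=1..T. g (w t) - \<mu>)" by simp
    moreover have "0 \<le> B" using B[OF x0_in_Q] by linarith
    then have "real T * B \<le> real (card Q) * B"
      using False ij(2) by (intro mult_right_mono) auto
    ultimately show ?thesis by linarith
  qed
qed

lemma walk_sum_ge_min_cycle_mean:
  assumes "walk E x0 w"
  shows "\<exists>K. \<forall>T. real T * Min (cycle_means g) - K \<le> (\<Sum>t=1..T. g (w t))"
proof -
  define \<mu> where "\<mu> = Min (cycle_means g)"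
  define B where "B = Max ((\<lambda>x. \<bar>g x - \<mu>\<bar>) ` Q)"
  have "real (j - i) * \<mu> \<le> (\<Sum>t=Suc i..j. g (v t))"
    if "walk E x0 v" "i < j" "j \<le> i + card Q" "v i = v j" for v i j
  proof -
    have "(\<Sum>t=Suc i..j. g (v t)) / real (j - i) \<in> cycle_means g"
      using that unfolding cycle_means_def by blast
    then have "\<mu> \<le> (\<Sum>t=Suc i..j. g (v t)) / real (j - i)"
      unfolding \<mu>_def using finite_cycle_means by simp
    then show ?thesis using \<open>i < j\<close> by (simp add: pos_le_divide_eq mult.commute)
  qed
  moreover have "\<bar>g x - \<mu>\<bar> \<le> B" if "x \<in> Q" for x
    unfolding B_def using finite_Q that by simp
  ultimately have "- (real (card Q) * B) \<le> (\<Sum>t=1..T. g (w t) - \<mu>)" for T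
    using walk_sum_deviation_ge[OF assms] by blast
  then have "\<forall>T. real T * \<mu> - real (card Q) * B \<le> (\<Sum>t=1..T. g (w t))"
    by (simp add: sum_subtractf algebra_simps)
  then show ?thesis unfolding \<mu>_def by blast
qed

lemma min_cycle_mean_attained:
  assumes "walk E x0 w0"
  obtains W where "walk E x0 W" "(\<lambda>T. (\<Sum>t=1..T. g (W t)) / real T) \<longlonglongrightarrow> Min (cycle_means g)"
proof -
  have "Min (cycle_means g) \<in> cycle_means g"
    using finite_cycle_means cycle_means_nonempty[OF assms] by (rule Min_in)
  then obtain w i j where w: "walk E x0 w" "i < j" "w i = w j"
    and mean: "Min (cycle_means g) = (\<Sum>t=Suc i..j. g (w t)) / real (j - i)"
    unfolding cycle_means_def by blast
  let ?W = "\<lambda>t. if t < i then w t else w (i + (t - i) mod (j - i))"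
  note W = walk_repeat_cycle[OF w]
  have "(\<Sum>t=Suc i..i + (j - i). g (?W t)) = (\<Sum>t=Suc i..j. g (w t))"
  proof (rule sum.cong)
    fix t assume "t \<in> {Suc i..j}"
    then show "g (?W t) = g (w t)" using W(3)[of t] by simp
  qed (use w(2) in simp)
  then have "(\<lambda>T. (\<Sum>t=1..T. g (?W t)) / real T) \<longlonglongrightarrow> Min (cycle_means g)"
    using eventually_periodic_average[of "j - i" i "\<lambda>t. g (?W t)"] W(2) w(2) mean by simp
  then show thesis using that W(1) by blast
qed

end

section \<open>The lock as a finite graph\<close>

fun opposite :: "dir \<Rightarrow> dir" where
  "opposite Down = Up"
| "opposite Up = Down"

lemma opposite_neq [simp]: "opposite d \<noteq> d" "d \<noteq> opposite d"
  by (cases d; simp)+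

lemma UNIV_dir: "(UNIV :: dir set) = {Down, Up}"
  using dir.exhaust by auto

instance dir :: finite
  by standard (simp add: UNIV_dir)

primrec last_proc :: "(nat \<Rightarrow> action) \<Rightarrow> nat \<Rightarrow> dir option" where
  "last_proc \<sigma> 0 = None"
| "last_proc \<sigma> (Suc t) = (case \<sigma> (Suc t) of Proc d \<Rightarrow> Some d | Wait \<Rightarrow> last_proc \<sigma> t)"

definition common_period :: "stream list \<Rightarrow> nat" where
  "common_period S = prod_list (map (\<lambda>(d, l, m). l) S)"

lemma common_period_pos: "valid_streams S \<Longrightarrow> 0 < common_period S"
  unfolding common_period_def valid_streams_def by (induction S) auto

lemma period_dvd_common_period: "(d, l, m) \<in> set S \<Longrightarrow> l dvd common_period S"
  unfolding common_period_def by (induction S) auto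

lemma arr_dir_mod_common_period: "arr_dir S d (t mod common_period S) = arr_dir S d t"
  unfolding arr_dir_def
proof (rule sum.cong)
  fix i assume "i \<in> {..<length S}"
  obtain d' l m where s: "S ! i = (d', l, m)" by (cases "S ! i") auto
  with \<open>i \<in> {..<length S}\<close> have "l dvd common_period S"
    by (metis lessThan_iff nth_mem period_dvd_common_period)
  then show "(if fst (S ! i) = d then arr (S ! i) (t mod common_period S) else 0)
    = (if fst (S ! i) = d then arr (S ! i) t else 0)"
    using s by (simp add: arr_def mod_mod_cancel)
qed simp

lemma arr_dir_le_length: "arr_dir S d t \<le> length S"
proof -
  have "arr_dir S d t \<le> (\<Sum>i<length S. 1)"
    unfolding arr_dir_def by (intro sum_mono) (simp add: arr_def split: prod.splits)
  then show ?thesis by simp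
qed

text \<open>\<open>last_dir\<close> determines the alignment of the lock, and \<open>waited\<close> lets the
  edges forbid two consecutive waits.\<close>

record lock_state =
  phase :: nat
  last_dir :: "dir option"
  queues :: "dir \<Rightarrow> nat"
  waited :: bool

definition lock_step :: "stream list \<Rightarrow> lock_state \<Rightarrow> action \<Rightarrow> lock_state" where
  "lock_step S x a =
     \<lparr>phase = Suc (phase x) mod common_period S,
      last_dir = (case a of Proc d \<Rightarrow> Some d | Wait \<Rightarrow> last_dir x),
      queues = (\<lambda>d. if a = Proc d then 0 else queues x d + arr_dir S d (Suc (phase x))),
      waited = (a = Wait)\<rparr>"

definition allowed :: "lock_state \<Rightarrow> action \<Rightarrow> bool" where
  "allowed x a \<longleftrightarrow> (case a of Wait \<Rightarrow> \<not> waited x | Proc d \<Rightarrow> last_dir x \<noteq> Some d)"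

definition lock_edge :: "stream list \<Rightarrow> lock_state \<Rightarrow> lock_state \<Rightarrow> bool" where
  "lock_edge S x y \<longleftrightarrow> (\<exists>a. allowed x a \<and> y = lock_step S x a)"

definition lock_init :: lock_state where
  "lock_init = \<lparr>phase = 0, last_dir = None, queues = (\<lambda>_. 0), waited = False\<rparr>"

definition state_of :: "stream list \<Rightarrow> (nat \<Rightarrow> action) \<Rightarrow> nat \<Rightarrow> lock_state" where
  "state_of S \<sigma> t =
     \<lparr>phase = t mod common_period S, last_dir = last_proc \<sigma> t,
      queues = (\<lambda>d. queue S \<sigma> d t), waited = (0 < t \<and> \<sigma> t = Wait)\<rparr>"

definition state_cost :: "lock_state \<Rightarrow> real" where
  "state_cost x = real (queues x Down + queues x Up)"

lemma state_of_0: "state_of S \<sigma> 0 = lock_init"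
  by (simp add: state_of_def lock_init_def)

lemma state_of_Suc: "state_of S \<sigma> (Suc t) = lock_step S (state_of S \<sigma> t) (\<sigma> (Suc t))"
proof -
  have "arr_dir S d (Suc (t mod common_period S)) = arr_dir S d (Suc t)" for d
    by (metis arr_dir_mod_common_period mod_Suc_eq)
  then show ?thesis
    by (auto simp: state_of_def lock_step_def mod_Suc_eq split: action.split)
qed

lemma state_cost_state_of: "state_cost (state_of S \<sigma> t) = real (cost S \<sigma> t)"
  by (simp add: state_cost_def state_of_def cost_def)

lemma walk_state_of:
  assumes "\<And>t. allowed (state_of S \<sigma> t) (\<sigma> (Suc t))"
  shows "walk (lock_edge S) lock_init (state_of S \<sigma>)"
  using assms by (auto simp: walk_def lock_edge_def state_of_0 state_of_Suc)

text \<open>\<open>k\<close> bounds the arrivals per period. A queue is emptied when processed and, since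
  processings alternate and waits are never consecutive, it grows for at most three periods
  before being processed again.\<close>

definition bounded_state :: "stream list \<Rightarrow> lock_state \<Rightarrow> bool" where
  "bounded_state S x \<longleftrightarrow> phase x < common_period S \<and>
     (let k = length S; b = (if waited x then k else 0) in
      case last_dir x of
        None \<Rightarrow> queues x Down \<le> b \<and> queues x Up \<le> b
      | Some d \<Rightarrow> queues x d \<le> b \<and> queues x (opposite d) \<le> b + 2 * k)"

lemma bounded_state_lock_step:
  assumes "valid_streams S" "bounded_state S x" "allowed x a"
  shows "bounded_state S (lock_step S x a)"
proof -
  have "a = Wait \<or> a = Proc Down \<or> a = Proc Up"
    by (metis action.exhaust dir.exhaust)
  moreover have "last_dir x = None \<or> last_dir x = Some Down \<or> last_dir x = Some Up"
    by (metis option.exhaust dir.exhaust)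
  ultimately show ?thesis
    using assms common_period_pos[OF assms(1)]
      arr_dir_le_length[of S Down "Suc (phase x)"] arr_dir_le_length[of S Up "Suc (phase x)"]
    by (elim disjE)
      (auto simp: bounded_state_def allowed_def lock_step_def Let_def split: if_splits)
qed

lemma finite_bounded_states: "finite {x. bounded_state S x}"
proof -
  define k where "k = 3 * length S"
  let ?mk = "\<lambda>(p, l, q, w). \<lparr>phase = p, last_dir = l, queues = q, waited = w\<rparr>"
  have "finite {q :: dir \<Rightarrow> nat. \<forall>d. q d \<in> {..k}}"
    using finite_set_of_finite_funs[of "UNIV :: dir set" "{..k}"] by simp
  then have "finite (?mk ` ({..<common_period S} \<times> UNIV \<times> {q. \<forall>d. q d \<in> {..k}} \<times> UNIV))"
    by simp
  moreover have "{x. bounded_state S x}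
      \<subseteq> ?mk ` ({..<common_period S} \<times> UNIV \<times> {q. \<forall>d. q d \<in> {..k}} \<times> UNIV)"
  proof
    fix x assume "x \<in> {x. bounded_state S x}"
    moreover have "last_dir x = None \<or> last_dir x = Some Down \<or> last_dir x = Some Up"
      by (metis option.exhaust dir.exhaust)
    ultimately have "phase x < common_period S" "queues x Down \<le> k" "queues x Up \<le> k"
      by (auto simp: bounded_state_def k_def Let_def split: if_splits)
    moreover have "queues x d \<le> k" for d
      using calculation by (cases d) auto
    ultimately show "x \<in> ?mk ` ({..<common_period S} \<times> UNIV \<times> {q. \<forall>d. q d \<in> {..k}} \<times> UNIV)"
      by (intro image_eqI[of _ _ "(phase x, last_dir x, queues x, waited x)"]) auto
  qed
  ultimately show ?thesis by (rule finite_subset[rotated])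
qed

section \<open>Filling idle periods\<close>

text \<open>\<open>fill \<sigma>\<close> keeps every processing of \<open>\<sigma>\<close> and processes in every idle period, except
  for a wait right before a processing of \<open>\<sigma>\<close> that would otherwise find the lock in the wrong
  alignment. Hence it never waits twice in a row and its queues are never longer.\<close>

definition fill_action :: "(nat \<Rightarrow> action) \<Rightarrow> nat \<Rightarrow> dir option \<Rightarrow> action" where
  "fill_action \<sigma> t ori = (case \<sigma> t of
     Proc d \<Rightarrow> Proc d
   | Wait \<Rightarrow> (case \<sigma> (Suc t) of
       Proc e \<Rightarrow> if ori = Some (opposite e) then Wait else Proc (opposite e)
     | Wait \<Rightarrow> Proc (case ori of Some d \<Rightarrow> opposite d | None \<Rightarrow> Down)))"

primrec fill_dir :: "(nat \<Rightarrow> action) \<Rightarrow> nat \<Rightarrow> dir option" where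
  "fill_dir \<sigma> 0 = None"
| "fill_dir \<sigma> (Suc t) =
     (case fill_action \<sigma> (Suc t) (fill_dir \<sigma> t) of Proc d \<Rightarrow> Some d | Wait \<Rightarrow> fill_dir \<sigma> t)"

definition fill :: "(nat \<Rightarrow> action) \<Rightarrow> nat \<Rightarrow> action" where
  "fill \<sigma> t = fill_action \<sigma> t (fill_dir \<sigma> (t - 1))"

lemma last_proc_fill: "last_proc (fill \<sigma>) t = fill_dir \<sigma> t"
proof (induction t)
  case (Suc t)
  have "fill \<sigma> (Suc t) = fill_action \<sigma> (Suc t) (fill_dir \<sigma> t)" by (simp add: fill_def)
  then show ?case using Suc.IH by (simp split: action.split)
qed simp

lemma fill_Proc: "\<sigma> t = Proc d \<Longrightarrow> fill \<sigma> t = Proc d"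
  by (simp add: fill_def fill_action_def)

lemma fill_no_double_wait: "fill \<sigma> t = Wait \<Longrightarrow> fill \<sigma> (Suc t) \<noteq> Wait"
  by (auto simp: fill_def fill_action_def split: action.splits if_splits)

lemma fill_alternates:
  assumes "feasible \<sigma>" "fill \<sigma> (Suc t) = Proc d"
  shows "fill_dir \<sigma> t \<noteq> Some d"
proof (cases "\<sigma> (Suc t)")
  case Wait
  then show ?thesis using assms(2)
    by (auto simp: fill_def fill_action_def split: action.splits if_splits option.splits)
next
  case (Proc e)
  then have "e = d" using assms(2) fill_Proc by simp
  show ?thesis
  proof (cases t)
    case (Suc s)
    show ?thesis
    proof (cases "\<sigma> t")
      case (Proc e')
      then have "e' \<noteq> d"
        using assms(1) \<open>\<sigma> (Suc t) = Proc e\<close> \<open>e = d\<close> Suc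
        unfolding feasible_def
        by (metis action.distinct(1) less_Suc_eq not_less_eq le_add1 plus_1_eq_Suc)
      then show ?thesis using Proc by (simp add: Suc fill_action_def)
    next
      case Wait
      then show ?thesis using \<open>\<sigma> (Suc t) = Proc e\<close> \<open>e = d\<close>
        by (auto simp: Suc fill_action_def)
    qed
  qed simp
qed

lemma allowed_fill:
  assumes "feasible \<sigma>"
  shows "allowed (state_of S (fill \<sigma>) t) (fill \<sigma> (Suc t))"
proof (cases "fill \<sigma> (Suc t)")
  case Wait
  then show ?thesis using fill_no_double_wait[of \<sigma> t] by (auto simp: allowed_def state_of_def)
next
  case (Proc d)
  then show ?thesis
    using fill_alternates[OF assms Proc] by (simp add: allowed_def state_of_def last_proc_fill)
qed

lemma queue_mono:
  assumes "\<And>t d. \<sigma> t = Proc d \<Longrightarrow> \<sigma>' t = Proc d"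
  shows "queue S \<sigma>' d t \<le> queue S \<sigma> d t"
  using assms by (induction t) auto

lemma cost_fill_le: "cost S (fill \<sigma>) t \<le> cost S \<sigma> t"
  unfolding cost_def using queue_mono[of \<sigma> "fill \<sigma>"] fill_Proc by (metis add_mono)

text \<open>At \<open>t = 0\<close>, \<open>action_of lock_init\<close> is the junk value \<open>Proc (the None)\<close>;
  the action of a schedule at period 0 is never used.\<close>

definition action_of :: "lock_state \<Rightarrow> action" where
  "action_of x = (if waited x then Wait else Proc (the (last_dir x)))"

lemma action_of_lock_step: "action_of (lock_step S x a) = a"
  by (cases a) (simp_all add: action_of_def lock_step_def)

lemma walk_lock_edge_step:
  assumes "walk (lock_edge S) lock_init W"
  shows "allowed (W t) (action_of (W (Suc t)))"
    and "W (Suc t) = lock_step S (W t) (action_of (W (Suc t)))"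
proof -
  obtain a where "allowed (W t) a" "W (Suc t) = lock_step S (W t) a"
    using assms by (auto simp: walk_def lock_edge_def)
  moreover from this(2) have "action_of (W (Suc t)) = a" by (simp add: action_of_lock_step)
  ultimately show "allowed (W t) (action_of (W (Suc t)))"
    and "W (Suc t) = lock_step S (W t) (action_of (W (Suc t)))" by simp_all
qed

lemma state_of_walk_actions:
  assumes "walk (lock_edge S) lock_init W"
  shows "state_of S (action_of \<circ> W) t = W t"
proof (induction t)
  case 0
  then show ?case using assms by (simp add: walk_def state_of_0)
next
  case (Suc t)
  then show ?case using walk_lock_edge_step(2)[OF assms] by (simp add: state_of_Suc)
qed

lemma walk_actions_no_double_wait:
  assumes "walk (lock_edge S) lock_init W"
  shows "\<not> (action_of (W t) = Wait \<and> action_of (W (Suc t)) = Wait)"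
  using walk_lock_edge_step(1)[OF assms, of t] by (auto simp: allowed_def action_of_def)

lemma walk_actions_feasible:
  assumes "walk (lock_edge S) lock_init W"
  shows "feasible (action_of \<circ> W)"
  unfolding feasible_def
proof (intro allI impI)
  fix s t d
  assume st: "1 \<le> s \<and> s < t \<and> (action_of \<circ> W) s = Proc d \<and> (action_of \<circ> W) t \<noteq> Wait
    \<and> (\<forall>r. s < r \<and> r < t \<longrightarrow> (action_of \<circ> W) r = Wait)"
  note edge = walk_lock_edge_step[OF assms]
  have "last_dir (W u) = Some d" if "s \<le> u" "u < t" for u
    using that
  proof (induction u rule: dec_induct)
    case base
    obtain s' where "s = Suc s'" using st by (cases s) auto
    then show ?case using edge(2)[of s'] st by (simp add: lock_step_def)
  next
    case (step u)
    then show ?case using edge(2)[of u] st by (auto simp: lock_step_def)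
  qed
  moreover have "allowed (W (t - 1)) (action_of (W t))"
    using edge(1)[of "t - 1"] st by simp
  ultimately show "(action_of \<circ> W) t \<noteq> Proc d"
    using st by (auto simp: allowed_def)
qed

locale lock_schedule =
  fixes S :: "stream list"
  assumes valid: "valid_streams S"

sublocale lock_schedule \<subseteq> finite_walks "lock_edge S" "{x. bounded_state S x}" lock_init
proof
  show "finite {x. bounded_state S x}" by (rule finite_bounded_states)
  show "lock_init \<in> {x. bounded_state S x}"
    using common_period_pos[OF valid] by (simp add: lock_init_def bounded_state_def)
  show "y \<in> {x. bounded_state S x}" if "x \<in> {x. bounded_state S x}" "lock_edge S x y" for x y
    using bounded_state_lock_step[OF valid] that by (auto simp: lock_edge_def)
qed

context lock_schedule
begin

lemma min_cycle_mean_le_avg_cost: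
  assumes "feasible \<sigma>" "has_avg_cost S \<sigma> c"
  shows "Min (cycle_means state_cost) \<le> c"
proof -
  obtain K where K: "\<forall>T. real T * Min (cycle_means state_cost) - K
      \<le> (\<Sum>t=1..T. state_cost (state_of S (fill \<sigma>) t))"
    using walk_sum_ge_min_cycle_mean[OF walk_state_of[OF allowed_fill[OF assms(1)]]] by blast
  have "(\<Sum>t=1..T. state_cost (state_of S (fill \<sigma>) t)) \<le> (\<Sum>t=1..T. real (cost S \<sigma> t))" for T
    by (intro sum_mono) (simp add: state_cost_state_of cost_fill_le)
  with K have "real T * Min (cycle_means state_cost) - K \<le> (\<Sum>t=1..T. real (cost S \<sigma> t))" for T
    by (meson order_trans)
  moreover have "(\<lambda>T. (\<Sum>t=1..T. real (cost S \<sigma> t)) / real T) \<longlonglongrightarrow> c"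
    using assms(2) by (simp add: has_avg_cost_def avg_cost_partial_def[abs_def])
  ultimately show ?thesis by (rule average_limit_ge)
qed

lemma min_cycle_mean_attained_by_schedule:
  obtains \<sigma> where "feasible \<sigma>" "\<And>t. \<not> (\<sigma> t = Wait \<and> \<sigma> (Suc t) = Wait)"
    "has_avg_cost S \<sigma> (Min (cycle_means state_cost))"
proof -
  have "feasible (\<lambda>_. Wait)" by (simp add: feasible_def)
  then obtain W where W: "walk (lock_edge S) lock_init W"
    "(\<lambda>T. (\<Sum>t=1..T. state_cost (W t)) / real T) \<longlonglongrightarrow> Min (cycle_means state_cost)"
    using min_cycle_mean_attained[OF walk_state_of[OF allowed_fill]] by blast
  have "state_cost (W t) = real (cost S (action_of \<circ> W) t)" for t
    using state_of_walk_actions[OF W(1)] state_cost_state_of by metis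
  then have "avg_cost_partial S (action_of \<circ> W) = (\<lambda>T. (\<Sum>t=1..T. state_cost (W t)) / real T)"
    by (simp add: avg_cost_partial_def[abs_def])
  then show thesis
    using walk_actions_feasible[OF W(1)] walk_actions_no_double_wait[OF W(1)] W(2)
    by (intro that[of "action_of \<circ> W"]) (simp_all add: has_avg_cost_def)
qed

end

theorem lemma5:
  fixes S :: "stream list"
  assumes "valid_streams S"
  shows "\<exists>\<sigma>. optimal S \<sigma> \<and> (\<forall>t\<ge>1. \<not> (\<sigma> t = Wait \<and> \<sigma> (Suc t) = Wait))"
proof -
  interpret lock_schedule S using assms by unfold_locales
  obtain \<sigma> where "feasible \<sigma>" "\<And>t. \<not> (\<sigma> t = Wait \<and> \<sigma> (Suc t) = Wait)"
    "has_avg_cost S \<sigma> (Min (cycle_means state_cost))"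
    using min_cycle_mean_attained_by_schedule by blast
  moreover have "optimal S \<sigma>"
    unfolding optimal_def using calculation min_cycle_mean_le_avg_cost by blast
  ultimately show ?thesis by blast
qed

end
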